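(* Let $d\ge3$ and let $\mathbf z_1,\dots,\mathbf z_d\in\mathbb Z^d$ be a basis of $\mathbb Z^d$. Suppose $|\underline{\mathbf z_3}|\geq|\underline{\mathbf z_1}|$ and $\det\underline\Lambda_{2,d-1}>3|\underline{\mathbf z_2}|\det\underline\Lambda_{2,d-2}$. Then $\mathfrak S_2\subset\operatorname{int}\mathfrak S_1$ and $R_2<R_1/3$.
   Context: $|\cdot|$ is the Euclidean norm. For $\mathbf x=(x_1,\dots,x_d)\in\mathbb R^d$ write $\underline{\mathbf x}=(x_1,\dots,x_{d-1})$. Let $\pi_d=\{\mathbf x\in\mathbb R^d:x_d=1\}$. For given vectors $\mathbf z_1,\mathbf z_2,\dots$: $\det\underline\Lambda_{k,l}=|\underline{\mathbf z_k}\wedge\dots\wedge\underline{\mathbf z_{k+l-1}}|$ ($1\le l\le d-1$); $R_k=1/(2|\underline{\mathbf z_{k+1}}|\det\underline\Lambda_{k,d-1})$; when $\underline{\mathbf z_k},\dots,\underline{\mathbf z_{k+d-2}}$ are linearly independent, $\boldsymbol\alpha_k$ is the unique point of $\pi_d$ orthogonal to $\mathbf z_k,\dots,\mathbf z_{k+d-2}$ and $\mathfrak S_k=\{\mathbf x\in\pi_d:|\mathbf x-\boldsymbol\alpha_k|\le R_k\}$, a closed ball in $\pi_d$ whose interior is taken relative to $\pi_d$. Whenever $\boldsymbol\alpha_k$ or $\mathfrak S_k$ appears it is implicitly assumed well defined. *)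

theory Defs
  imports Main "HOL-Library.Multiset" "Jordan_Normal_Form.Determinant"
begin

(* Vectors of R^n are functions nat => real, coordinates indexed 1..n.
   A family of vectors z_1, z_2, ... is a function nat => nat => int
   (z k i = i-th coordinate of z_k). *)

definition ip :: "nat \<Rightarrow> (nat \<Rightarrow> real) \<Rightarrow> (nat \<Rightarrow> real) \<Rightarrow> real" where
  "ip n x y = (\<Sum>i=1..n. x i * y i)"

definition vnorm :: "nat \<Rightarrow> (nat \<Rightarrow> real) \<Rightarrow> real" where
  "vnorm n x = sqrt (ip n x x)"

(* |u_k /\ ... /\ u_{k+l-1}| in R^n : square root of the Gram determinant *)
definition wedge_norm :: "nat \<Rightarrow> (nat \<Rightarrow> nat \<Rightarrow> real) \<Rightarrow> nat \<Rightarrow> nat \<Rightarrow> real" where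
  "wedge_norm n u k l = sqrt (det (mat l l (\<lambda>(a,b). ip n (u (k+a)) (u (k+b)))))"

definition zr :: "(nat \<Rightarrow> nat \<Rightarrow> int) \<Rightarrow> nat \<Rightarrow> nat \<Rightarrow> real" where
  "zr z k i = real_of_int (z k i)"

(* underline z_k is zr z k viewed in R^(d-1), i.e. only coordinates 1..d-1 are used *)
definition detLam :: "nat \<Rightarrow> (nat \<Rightarrow> nat \<Rightarrow> int) \<Rightarrow> nat \<Rightarrow> nat \<Rightarrow> real" where
  "detLam d z k l = wedge_norm (d-1) (zr z) k l"

definition Rk :: "nat \<Rightarrow> (nat \<Rightarrow> nat \<Rightarrow> int) \<Rightarrow> nat \<Rightarrow> real" where
  "Rk d z k = 1 / (2 * vnorm (d-1) (zr z (k+1)) * detLam d z k (d-1))"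

definition plane :: "nat \<Rightarrow> (nat \<Rightarrow> real) set" where
  "plane d = {x. x d = 1 \<and> (\<forall>i. i \<notin> {1..d} \<longrightarrow> x i = 0)}"

definition under_indep :: "nat \<Rightarrow> (nat \<Rightarrow> nat \<Rightarrow> int) \<Rightarrow> nat \<Rightarrow> bool" where
  "under_indep d z k = (\<forall>c::nat \<Rightarrow> real.
      (\<forall>i\<in>{1..d-1}. (\<Sum>j=k..k+d-2. c j * zr z j i) = 0) \<longrightarrow> (\<forall>j\<in>{k..k+d-2}. c j = 0))"

definition alpha :: "nat \<Rightarrow> (nat \<Rightarrow> nat \<Rightarrow> int) \<Rightarrow> nat \<Rightarrow> (nat \<Rightarrow> real)" where
  "alpha d z k = (THE x. x \<in> plane d \<and> (\<forall>j\<in>{k..k+d-2}. ip d x (zr z j) = 0))"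

definition Sk :: "nat \<Rightarrow> (nat \<Rightarrow> nat \<Rightarrow> int) \<Rightarrow> nat \<Rightarrow> (nat \<Rightarrow> real) set" where
  "Sk d z k = {x \<in> plane d. vnorm d (x - alpha d z k) \<le> Rk d z k}"

definition relint_plane :: "nat \<Rightarrow> (nat \<Rightarrow> real) set \<Rightarrow> (nat \<Rightarrow> real) set" where
  "relint_plane d A = {x \<in> A. \<exists>e>0. \<forall>y\<in>plane d. vnorm d (y - x) < e \<longrightarrow> y \<in> A}"

definition Zbasis :: "nat \<Rightarrow> (nat \<Rightarrow> nat \<Rightarrow> int) \<Rightarrow> bool" where
  "Zbasis d z = ((\<forall>v::nat \<Rightarrow> int. \<exists>c::nat \<Rightarrow> int. \<forall>i\<in>{1..d}. v i = (\<Sum>k=1..d. c k * z k i)) \<and>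
     (\<forall>c::nat \<Rightarrow> int. (\<forall>i\<in>{1..d}. (\<Sum>k=1..d. c k * z k i) = 0) \<longrightarrow> (\<forall>k\<in>{1..d}. c k = 0)))"

end

theory Submission imports Defs "HOL-Analysis.L2_Norm" begin

(* Let M be the unimodular matrix with rows z_1, ..., z_d and U_1, U_2 the square matrices of the
   first d-1 coordinates of z_1, ..., z_{d-1} and of z_2, ..., z_d, so that det Lambda_{k,d-1} =
   |det U_k| (norms and Lambda's below are those of the underlined vectors).  The centre alpha_1
   (alpha_2) is the row of cofactors of M belonging to z_d (to z_1), scaled into pi_d.  The first
   d-1 coordinates of alpha_2 - alpha_1 solve U_1 y = s e_1 with |s| = 1/|det U_2|, so Cramer's
   rule gives |alpha_2 - alpha_1| = g / (|det U_1| |det U_2|), where g = det Lambda_{2,d-2} is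
   the norm of the first cofactor row of U_1.  Expanding det U_1 along its first row and applying
   Cauchy-Schwarz gives |det U_1| <= |z_1| g <= |z_3| g, while the hypothesis is
   |det U_2| > 3 |z_2| g; together they yield R_2 < R_1/3 and |alpha_2 - alpha_1| + R_2 < R_1. *)

lemma ip_eq_sum_lessThan: "ip n x y = (\<Sum>b<n. x (Suc b) * y (Suc b))"
  unfolding ip_def by (simp add: sum.atLeast1_atMost_eq)

lemma vnorm_eq_L2_set: "vnorm n x = L2_set x {1..n}"
  unfolding vnorm_def ip_def L2_set_def by (simp add: power2_eq_square)

lemma vnorm_eq_L2_set_lessThan: "vnorm n x = L2_set (\<lambda>b. x (Suc b)) {..<n}"
  unfolding vnorm_def ip_eq_sum_lessThan L2_set_def by (simp add: power2_eq_square)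

lemma vnorm_triangle: "vnorm n (\<lambda>i. x i + y i) \<le> vnorm n x + vnorm n y"
  unfolding vnorm_eq_L2_set by (rule L2_set_triangle_ineq)

lemma vnorm_pos: assumes "i \<in> {1..n}" "x i \<noteq> 0" shows "vnorm n x > 0"
  using assms L2_set_eq_0_iff[of "{1..n}" x] unfolding vnorm_eq_L2_set
  by (metis finite_atLeastAtMost L2_set_nonneg order_le_less)

lemma L2_set_scale: "L2_set (\<lambda>i. r * f i) A = \<bar>r\<bar> * L2_set f A"
  unfolding L2_set_def
  by (simp add: power_mult_distrib real_sqrt_mult sum_nonneg flip: sum_distrib_left)

section \<open>Cofactors\<close>

lemma sum_row_mult_cofactor:
  assumes A: "A \<in> carrier_mat n n" and "i < n" "j < n"
  shows "(\<Sum>k<n. A $$ (i,k) * cofactor A j k) = (if i = j then det A else 0)"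
proof -
  have "(A * adj_mat A) $$ (i,j) = (det A \<cdot>\<^sub>m 1\<^sub>m n) $$ (i,j)"
    using adj_mat(2)[OF A] by simp
  moreover have "(A * adj_mat A) $$ (i,j) = (\<Sum>k<n. A $$ (i,k) * cofactor A j k)"
    using assms unfolding adj_mat_def by (auto simp: scalar_prod_def lessThan_atLeast0)
  ultimately show ?thesis using assms by simp
qed

lemma sum_cofactor_mult_col:
  assumes A: "A \<in> carrier_mat n n" and "k < n" "j < n"
  shows "(\<Sum>i<n. cofactor A i k * A $$ (i,j)) = (if k = j then det A else 0)"
proof -
  have "(adj_mat A * A) $$ (k,j) = (det A \<cdot>\<^sub>m 1\<^sub>m n) $$ (k,j)"
    using adj_mat(3)[OF A] by simp
  moreover have "(adj_mat A * A) $$ (k,j) = (\<Sum>i<n. cofactor A i k * A $$ (i,j))"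
    using assms unfolding adj_mat_def by (auto simp: scalar_prod_def lessThan_atLeast0)
  ultimately show ?thesis using assms by simp
qed

lemma det_mult_eq_sum_cofactor:
  assumes A: "A \<in> carrier_mat n n" and k: "k < n"
  shows "det A * y k = (\<Sum>i<n. cofactor A i k * (\<Sum>j<n. A $$ (i,j) * y j))"
proof -
  have "(\<Sum>i<n. cofactor A i k * (\<Sum>j<n. A $$ (i,j) * y j))
      = (\<Sum>i<n. \<Sum>j<n. y j * (cofactor A i k * A $$ (i,j)))"
    by (simp add: sum_distrib_left mult_ac)
  also have "\<dots> = (\<Sum>j<n. y j * (\<Sum>i<n. cofactor A i k * A $$ (i,j)))"
    by (subst sum.swap) (simp add: sum_distrib_left)
  also have "\<dots> = (\<Sum>j<n. y j * (if k = j then det A else 0))"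
    using sum_cofactor_mult_col[OF A k] by simp
  also have "\<dots> = det A * y k"
    using k by (simp add: if_distrib cong: if_cong)
  finally show ?thesis ..
qed

lemma abs_det_le_L2_row_cofactor:
  assumes A: "(A :: real mat) \<in> carrier_mat n n" and "0 < n"
  shows "\<bar>det A\<bar> \<le> L2_set (\<lambda>k. A $$ (0,k)) {..<n} * L2_set (cofactor A 0) {..<n}"
proof -
  have "\<bar>det A\<bar> = \<bar>\<Sum>k<n. A $$ (0,k) * cofactor A 0 k\<bar>"
    using laplace_expansion_row[OF A \<open>0 < n\<close>] by simp
  also have "\<dots> \<le> (\<Sum>k<n. \<bar>A $$ (0,k)\<bar> * \<bar>cofactor A 0 k\<bar>)"
    by (rule order_trans[OF sum_abs]) (simp add: abs_mult)
  also have "\<dots> \<le> L2_set (\<lambda>k. A $$ (0,k)) {..<n} * L2_set (cofactor A 0) {..<n}"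
    by (rule L2_set_mult_ineq)
  finally show ?thesis .
qed

section \<open>Coordinate matrices and Gram determinants\<close>

definition coord_mat :: "nat \<Rightarrow> (nat \<Rightarrow> nat \<Rightarrow> real) \<Rightarrow> nat \<Rightarrow> real mat" where
  "coord_mat n u k = mat n n (\<lambda>(a,b). u (k+a) (Suc b))"

lemma coord_mat_carrier [simp]: "coord_mat n u k \<in> carrier_mat n n"
  by (simp add: coord_mat_def)

lemma dim_coord_mat [simp]: "dim_row (coord_mat n u k) = n" "dim_col (coord_mat n u k) = n"
  by (simp_all add: coord_mat_def)

lemma coord_mat_index [simp]: "a < n \<Longrightarrow> b < n \<Longrightarrow> coord_mat n u k $$ (a,b) = u (k+a) (Suc b)"
  by (simp add: coord_mat_def)

lemma mat_delete_coord_mat_last: "mat_delete (coord_mat (Suc n) u k) n n = coord_mat n u k"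
  by (intro eq_matI) (auto simp: mat_delete_def coord_mat_def)

lemma mat_delete_coord_mat_first: "mat_delete (coord_mat (Suc n) u k) 0 n = coord_mat n u (Suc k)"
  by (intro eq_matI) (auto simp: mat_delete_def coord_mat_def)

lemma cofactor_coord_mat_last: "cofactor (coord_mat (Suc n) u k) n n = det (coord_mat n u k)"
  by (simp add: cofactor_def mat_delete_coord_mat_last)

lemma cofactor_coord_mat_first:
  "cofactor (coord_mat (Suc n) u k) 0 n = (-1)^n * det (coord_mat n u (Suc k))"
  by (simp add: cofactor_def mat_delete_coord_mat_first)

lemma wedge_norm_eq_abs_det: "wedge_norm n u k n = \<bar>det (coord_mat n u k)\<bar>"
proof -
  let ?U = "coord_mat n u k"
  have "mat n n (\<lambda>(a,b). ip n (u (k+a)) (u (k+b))) = ?U * transpose_mat ?U"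
    by (intro eq_matI) (auto simp: ip_eq_sum_lessThan scalar_prod_def lessThan_atLeast0 intro!: sum.cong)
  moreover have "det (?U * transpose_mat ?U) = det ?U * det ?U"
    using det_mult[of ?U n] det_transpose[of ?U n] by simp
  ultimately show ?thesis by (simp add: wedge_norm_def)
qed

text \<open>Bordering the rows other than the first by the first cofactor row, which is orthogonal to
  them, gives a matrix W with W W^T = diag(S, Gram) and det W = S.\<close>

lemma det_gram_tail_rows:
  assumes U: "(U :: real mat) \<in> carrier_mat n n" and "0 < n" and dU: "det U \<noteq> 0"
  shows "det (mat (n-1) (n-1) (\<lambda>(a,b). \<Sum>k<n. U $$ (Suc a,k) * U $$ (Suc b,k)))
       = (\<Sum>k<n. (cofactor U 0 k)\<^sup>2)"
    (is "det ?G = ?S")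
proof -
  define W where "W = mat n n (\<lambda>(i,j). if i = 0 then cofactor U 0 j else U $$ (i,j))"
  have W: "W \<in> carrier_mat n n" by (simp add: W_def)
  have "mat_delete W 0 k = mat_delete U 0 k" for k
    using U by (intro eq_matI) (auto simp: mat_delete_def W_def)
  then have "det W = (\<Sum>j<n. W $$ (0,j) * cofactor U 0 j)"
    using laplace_expansion_row[OF W \<open>0 < n\<close>] by (simp add: cofactor_def)
  also have "\<dots> = ?S"
    using \<open>0 < n\<close> by (intro sum.cong) (auto simp: W_def power2_eq_square)
  finally have detW: "det W = ?S" .
  define WW where "WW = W * transpose_mat W"
  have WW: "WW \<in> carrier_mat n n" using W by (simp add: WW_def)
  have WW_index: "WW $$ (i,j) = (\<Sum>k<n. W $$ (i,k) * W $$ (j,k))" if "i < n" "j < n" for i j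
    using that W unfolding WW_def by (auto simp: scalar_prod_def lessThan_atLeast0)
  have WW_col0: "WW $$ (i,0) = (if i = 0 then ?S else 0)" if i: "i < n" for i
  proof (cases "i = 0")
    case True
    then show ?thesis using WW_index[OF i \<open>0 < n\<close>] by (simp add: W_def power2_eq_square)
  next
    case False
    then have "WW $$ (i,0) = (\<Sum>k<n. U $$ (i,k) * cofactor U 0 k)"
      using WW_index[OF i \<open>0 < n\<close>] i by (simp add: W_def)
    then show ?thesis using sum_row_mult_cofactor[OF U i \<open>0 < n\<close>] False by simp
  qed
  have "?S * ?S = det WW"
    using det_mult[OF W, of "transpose_mat W"] det_transpose[OF W] W by (simp add: WW_def detW)
  also have "\<dots> = (\<Sum>i<n. WW $$ (i,0) * cofactor WW i 0)"
    by (rule laplace_expansion_column[OF WW \<open>0 < n\<close>])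
  also have "\<dots> = (\<Sum>i<n. if i = 0 then ?S * cofactor WW 0 0 else 0)"
    by (intro sum.cong) (auto simp: WW_col0)
  also have "\<dots> = ?S * cofactor WW 0 0"
    using \<open>0 < n\<close> by simp
  also have "cofactor WW 0 0 = det ?G"
  proof -
    have "mat_delete WW 0 0 = ?G"
      using WW \<open>0 < n\<close> by (intro eq_matI) (auto simp: mat_delete_def WW_index W_def)
    then show ?thesis by (simp add: cofactor_def)
  qed
  finally have "?S * ?S = ?S * det ?G" .
  moreover have "?S \<noteq> 0"
  proof
    assume "?S = 0"
    then have "\<forall>k<n. cofactor U 0 k = 0" by (simp add: sum_nonneg_eq_0_iff)
    then show False using sum_row_mult_cofactor[OF U \<open>0 < n\<close> \<open>0 < n\<close>] dU by simp
  qed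
  ultimately show ?thesis by simp
qed

lemma wedge_norm_tail_eq_L2_cofactor:
  assumes "det (coord_mat n u k) \<noteq> 0" and "0 < n"
  shows "wedge_norm n u (Suc k) (n-1) = L2_set (cofactor (coord_mat n u k) 0) {..<n}"
proof -
  let ?U = "coord_mat n u k"
  have "mat (n-1) (n-1) (\<lambda>(a,b). ip n (u (Suc k + a)) (u (Suc k + b)))
      = mat (n-1) (n-1) (\<lambda>(a,b). \<Sum>j<n. ?U $$ (Suc a,j) * ?U $$ (Suc b,j))"
    by (intro eq_matI) (auto simp: ip_eq_sum_lessThan intro!: sum.cong)
  then show ?thesis
    using det_gram_tail_rows[OF coord_mat_carrier assms(2,1)]
    by (simp add: wedge_norm_def L2_set_def)
qed

section \<open>Determinants of the vectors z_k\<close>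

lemma det_coord_mat_neq_0:
  assumes indep: "under_indep d z k" and "2 \<le> d"
  shows "det (coord_mat (d-1) (zr z) k) \<noteq> 0"
proof
  let ?U = "coord_mat (d-1) (zr z) k"
  assume "det ?U = 0"
  then have "det (transpose_mat ?U) = 0" by (simp add: det_transpose[OF coord_mat_carrier])
  then obtain v where v: "v \<in> carrier_vec (d-1)" "v \<noteq> 0\<^sub>v (d-1)" "transpose_mat ?U *\<^sub>v v = 0\<^sub>v (d-1)"
    using det_0_iff_vec_prod_zero_field[of "transpose_mat ?U" "d-1"] by auto
  define c where "c j = v $ (j - k)" for j
  have "(\<Sum>j=k..k+d-2. c j * zr z j i) = 0" if i: "i \<in> {1..d-1}" for i
  proof -
    have "(\<Sum>j=k..k+d-2. c j * zr z j i) = (\<Sum>a=0..d-2. c (a+k) * zr z (a+k) i)"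
      using sum.shift_bounds_cl_nat_ivl[of "\<lambda>j. c j * zr z j i" 0 k "d-2"] \<open>2 \<le> d\<close>
      by (simp add: add.commute)
    also have "{0..d-2} = {..<d-1}" using \<open>2 \<le> d\<close> by auto
    also have "(\<Sum>a<d-1. c (a+k) * zr z (a+k) i) = (\<Sum>a<d-1. v $ a * ?U $$ (a, i-1))"
      using i by (intro sum.cong) (auto simp: c_def add.commute)
    also have "\<dots> = (transpose_mat ?U *\<^sub>v v) $ (i-1)"
      using v(1) i by (auto simp: scalar_prod_def lessThan_atLeast0 mult.commute intro!: sum.cong)
    also have "\<dots> = 0"
    proof -
      have "i - 1 < d - 1" using i by auto
      then show ?thesis using v(3) by simp
    qed
    finally show ?thesis .
  qed
  then have c0: "\<forall>j\<in>{k..k+d-2}. c j = 0" using indep unfolding under_indep_def by blast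
  have "v $ a = 0" if "a < d-1" for a
    using bspec[OF c0, of "k+a"] that by (simp add: c_def)
  then have "v = 0\<^sub>v (d-1)" using v(1) by (intro eq_vecI) auto
  with v(2) show False ..
qed

lemma abs_det_coord_mat_Zbasis:
  assumes "Zbasis d z"
  shows "\<bar>det (coord_mat d (zr z) 1)\<bar> = 1"
proof -
  define Z where "Z = mat d d (\<lambda>(i,j). z (Suc i) (Suc j))"
  obtain coeff where coeff: "\<And>v i. i \<in> {1..d} \<Longrightarrow> v i = (\<Sum>k=1..d. coeff v k * z k i)"
    using assms unfolding Zbasis_def by metis
  define e where "e i = (\<lambda>i'. if i' = Suc i then 1 else 0 :: int)" for i
  define C where "C = mat d d (\<lambda>(i,k). coeff (e i) (Suc k))"
  have "C * Z = 1\<^sub>m d"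
  proof (rule eq_matI)
    fix i j assume "i < dim_row (1\<^sub>m d :: int mat)" "j < dim_col (1\<^sub>m d :: int mat)"
    then have ij: "i < d" "j < d" by auto
    have "(C * Z) $$ (i,j) = (\<Sum>k<d. coeff (e i) (Suc k) * z (Suc k) (Suc j))"
      using ij by (simp add: C_def Z_def scalar_prod_def lessThan_atLeast0)
    also have "\<dots> = e i (Suc j)"
      using coeff[of "Suc j" "e i"] ij by (simp add: sum.atLeast1_atMost_eq)
    finally show "(C * Z) $$ (i,j) = 1\<^sub>m d $$ (i,j)" using ij by (simp add: e_def)
  qed (auto simp: C_def Z_def)
  then have "det C * det Z = 1"
    using det_mult[of C d Z] by (simp add: C_def Z_def)
  then have "\<bar>det Z\<bar> = 1" by (auto simp: zmult_eq_1_iff)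
  moreover have "coord_mat d (zr z) 1 = map_mat real_of_int Z"
    by (intro eq_matI) (auto simp: Z_def zr_def)
  ultimately show ?thesis by (simp flip: of_int_abs)
qed

lemma vnorm_pos_if_under_indep:
  assumes indep: "under_indep d z k" and j: "j \<in> {k..k+d-2}"
  shows "vnorm (d-1) (zr z j) > 0"
proof (rule ccontr)
  assume "\<not> ?thesis"
  then have zero: "zr z j i = 0" if "i \<in> {1..d-1}" for i
    using vnorm_pos[OF that, of "zr z j"] by blast
  define c where "c j' = (if j' = j then 1 else 0 :: real)" for j'
  have "(\<Sum>j'=k..k+d-2. c j' * zr z j' i) = 0" if "i \<in> {1..d-1}" for i
  proof -
    have "(\<Sum>j'=k..k+d-2. c j' * zr z j' i) = (\<Sum>j'=k..k+d-2. if j' = j then zr z j i else 0)"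
      by (intro sum.cong) (auto simp: c_def)
    then show ?thesis using j zero[OF that] by simp
  qed
  then have "c j = 0" using indep j unfolding under_indep_def by blast
  then show False by (simp add: c_def)
qed

lemma detLam_eq_abs_det: "detLam d z k (d-1) = \<bar>det (coord_mat (d-1) (zr z) k)\<bar>"
  by (simp add: detLam_def wedge_norm_eq_abs_det)

lemma detLam_pos: "under_indep d z k \<Longrightarrow> 2 \<le> d \<Longrightarrow> 0 < detLam d z k (d-1)"
  using det_coord_mat_neq_0[of d z k] detLam_eq_abs_det[of d z k] by simp

lemma detLam_tail_eq_L2_cofactor:
  assumes "under_indep d z k" and "2 \<le> d"
  shows "detLam d z (Suc k) (d-2) = L2_set (cofactor (coord_mat (d-1) (zr z) k) 0) {..<d-1}"
  using wedge_norm_tail_eq_L2_cofactor[OF det_coord_mat_neq_0[OF assms]] \<open>2 \<le> d\<close>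
  by (simp add: detLam_def numeral_2_eq_2)

lemma detLam_le_vnorm_mult_detLam:
  assumes "under_indep d z k" and "2 \<le> d"
  shows "detLam d z k (d-1) \<le> vnorm (d-1) (zr z k) * detLam d z (Suc k) (d-2)"
proof -
  let ?U = "coord_mat (d-1) (zr z) k"
  have "L2_set (\<lambda>b. ?U $$ (0,b)) {..<d-1} = vnorm (d-1) (zr z k)"
    unfolding vnorm_eq_L2_set_lessThan by (intro L2_set_cong) auto
  then show ?thesis
    using abs_det_le_L2_row_cofactor[of ?U "d-1"] detLam_tail_eq_L2_cofactor[OF assms]
      detLam_eq_abs_det[of d z k] \<open>2 \<le> d\<close>
    by simp
qed

section \<open>The centres of the balls\<close>

lemma plane_eqI:
  assumes x: "x \<in> plane (Suc n)" and x': "x' \<in> plane (Suc n)"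
    and eq: "\<And>b. b < n \<Longrightarrow> x (Suc b) = x' (Suc b)"
  shows "x = x'"
proof
  fix i
  show "x i = x' i"
  proof (cases "i \<in> {1..Suc n}")
    case True
    then obtain b where "i = Suc b" "b \<le> n" by (cases i) auto
    then show ?thesis using x x' eq[of b] by (cases "b = n") (auto simp: plane_def)
  next
    case False
    then show ?thesis using x x' by (auto simp: plane_def)
  qed
qed

lemma ip_diff_plane:
  assumes "x \<in> plane (Suc n)" and "x' \<in> plane (Suc n)"
  shows "ip (Suc n) x v - ip (Suc n) x' v = (\<Sum>b<n. (x (Suc b) - x' (Suc b)) * v (Suc b))"
  using assms by (simp add: ip_eq_sum_lessThan plane_def algebra_simps sum_subtractf)

lemma vnorm_diff_plane:
  assumes "x \<in> plane (Suc n)" and "x' \<in> plane (Suc n)"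
  shows "vnorm (Suc n) (x - x') = L2_set (\<lambda>b. x (Suc b) - x' (Suc b)) {..<n}"
  using assms by (simp add: vnorm_def ip_eq_sum_lessThan plane_def L2_set_def power2_eq_square)

lemma alpha_eqI:
  assumes indep: "under_indep d z k" and "2 \<le> d" and x: "x \<in> plane d"
    and orth: "\<forall>j\<in>{k..k+d-2}. ip d x (zr z j) = 0"
  shows "alpha d z k = x"
  unfolding alpha_def
proof (rule the_equality)
  show "x \<in> plane d \<and> (\<forall>j\<in>{k..k+d-2}. ip d x (zr z j) = 0)" using x orth by blast
next
  fix x' assume "x' \<in> plane d \<and> (\<forall>j\<in>{k..k+d-2}. ip d x' (zr z j) = 0)"
  then have x': "x' \<in> plane d" and orth': "\<forall>j\<in>{k..k+d-2}. ip d x' (zr z j) = 0" by auto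
  define n where "n = d - 1"
  have d: "d = Suc n" using \<open>2 \<le> d\<close> by (simp add: n_def)
  define U where "U = coord_mat n (zr z) k"
  have U: "U \<in> carrier_mat n n" and detU: "det U \<noteq> 0"
    using det_coord_mat_neq_0[OF indep \<open>2 \<le> d\<close>] by (simp_all add: U_def n_def)
  define y where "y b = x' (Suc b) - x (Suc b)" for b
  have rows: "(\<Sum>b<n. U $$ (a,b) * y b) = 0" if "a < n" for a
  proof -
    have "(\<Sum>b<n. U $$ (a,b) * y b) = (\<Sum>b<n. (x' (Suc b) - x (Suc b)) * zr z (k+a) (Suc b))"
      using that by (auto simp: U_def y_def intro!: sum.cong)
    also have "\<dots> = ip d x' (zr z (k+a)) - ip d x (zr z (k+a))"
      using ip_diff_plane[of x' n x "zr z (k+a)"] x x' by (simp add: d)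
    also have "\<dots> = 0" using orth' orth that d by auto
    finally show ?thesis .
  qed
  have "y b = 0" if "b < n" for b
    using det_mult_eq_sum_cofactor[OF U that, of y] rows detU by simp
  then show "x' = x" using x x' by (intro plane_eqI[where n = n]) (auto simp: d y_def)
qed

text \<open>The cofactors of row r of a matrix are orthogonal to all its other rows; scaling the last
  one to 1 gives a point of the hyperplane.\<close>

definition cofactor_point :: "nat \<Rightarrow> real mat \<Rightarrow> nat \<Rightarrow> nat \<Rightarrow> real" where
  "cofactor_point d M r i = (if i \<in> {1..d} then cofactor M r (i-1) / cofactor M r (d-1) else 0)"

lemma cofactor_point_in_plane:
  "cofactor M r (d-1) \<noteq> 0 \<Longrightarrow> 0 < d \<Longrightarrow> cofactor_point d M r \<in> plane d"
  by (auto simp: plane_def cofactor_point_def)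

lemma ip_cofactor_point:
  assumes j: "j \<in> {1..d}" and r: "r < d"
  shows "ip d (cofactor_point d (coord_mat d u 1) r) (u j)
       = (if j = Suc r then det (coord_mat d u 1) / cofactor (coord_mat d u 1) r (d-1) else 0)"
proof -
  let ?M = "coord_mat d u 1"
  have "ip d (cofactor_point d ?M r) (u j)
      = (\<Sum>b<d. ?M $$ (j-1,b) * cofactor ?M r b) / cofactor ?M r (d-1)"
    using j by (auto simp: ip_eq_sum_lessThan cofactor_point_def sum_divide_distrib intro!: sum.cong)
  also have "\<dots> = (if j - 1 = r then det ?M else 0) / cofactor ?M r (d-1)"
  proof -
    have "j - 1 < d" using j by auto
    then show ?thesis by (simp only: sum_row_mult_cofactor[OF coord_mat_carrier _ r])
  qed
  finally show ?thesis using j by auto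
qed

lemma alpha_eq_cofactor_point:
  assumes "under_indep d z k" and "2 \<le> d" and "r < d"
    and rows: "\<And>j. j \<in> {k..k+d-2} \<Longrightarrow> j \<in> {1..d} \<and> j \<noteq> Suc r"
    and "cofactor (coord_mat d (zr z) 1) r (d-1) \<noteq> 0"
  shows "alpha d z k = cofactor_point d (coord_mat d (zr z) 1) r"
proof (rule alpha_eqI)
  show "cofactor_point d (coord_mat d (zr z) 1) r \<in> plane d"
    using assms by (intro cofactor_point_in_plane) auto
  show "\<forall>j\<in>{k..k+d-2}. ip d (cofactor_point d (coord_mat d (zr z) 1) r) (zr z j) = 0"
    using rows ip_cofactor_point[OF _ \<open>r < d\<close>, of _ "zr z"] by auto
qed (use assms in auto)

lemma dist_cofactor_points:
  fixes u :: "nat \<Rightarrow> nat \<Rightarrow> real"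
  assumes "0 < n" and U1: "det (coord_mat n u 1) \<noteq> 0" and U2: "det (coord_mat n u 2) \<noteq> 0"
  defines "M \<equiv> coord_mat (Suc n) u 1"
  shows "vnorm (Suc n) (cofactor_point (Suc n) M 0 - cofactor_point (Suc n) M n)
       = \<bar>det M\<bar> * L2_set (cofactor (coord_mat n u 1) 0) {..<n}
         / (\<bar>det (coord_mat n u 1)\<bar> * \<bar>det (coord_mat n u 2)\<bar>)"
proof -
  define U where "U = coord_mat n u 1"
  have cof_last: "cofactor M n n = det U"
    by (simp add: M_def U_def cofactor_coord_mat_last)
  have cof_first: "cofactor M 0 n = (-1)^n * det (coord_mat n u 2)"
    using cofactor_coord_mat_first[of n u 1] by (simp add: M_def numeral_2_eq_2)
  define a1 where "a1 = cofactor_point (Suc n) M n"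
  define a2 where "a2 = cofactor_point (Suc n) M 0"
  have a1: "a1 \<in> plane (Suc n)" and a2: "a2 \<in> plane (Suc n)"
    using U1 U2 by (auto simp: a1_def a2_def cof_last cof_first U_def intro!: cofactor_point_in_plane)
  define s where "s = det M / cofactor M 0 n"
  define y where "y b = a2 (Suc b) - a1 (Suc b)" for b
  have U: "U \<in> carrier_mat n n" by (simp add: U_def)
  have rows: "(\<Sum>b<n. U $$ (a,b) * y b) = (if a = 0 then s else 0)" if "a < n" for a
  proof -
    have "(\<Sum>b<n. U $$ (a,b) * y b) = ip (Suc n) a2 (u (Suc a)) - ip (Suc n) a1 (u (Suc a))"
      using ip_diff_plane[OF a2 a1] that by (simp add: U_def y_def mult.commute)
    also have "\<dots> = (if a = 0 then s else 0)"
      using that ip_cofactor_point[of "Suc a" "Suc n" 0 u] ip_cofactor_point[of "Suc a" "Suc n" n u]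
      unfolding a1_def a2_def M_def s_def by auto
    finally show ?thesis .
  qed
  then have y: "y b = s / det U * cofactor U 0 b" if "b < n" for b
  proof -
    have "det U * y b = (\<Sum>i<n. cofactor U i b * (if i = 0 then s else 0))"
      using det_mult_eq_sum_cofactor[OF U that, of y] rows by simp
    also have "\<dots> = s * cofactor U 0 b" using \<open>0 < n\<close> by (simp add: if_distrib cong: if_cong)
    finally show ?thesis using U1 by (simp add: U_def field_simps)
  qed
  have "vnorm (Suc n) (a2 - a1) = L2_set y {..<n}"
    unfolding y_def by (rule vnorm_diff_plane[OF a2 a1])
  also have "\<dots> = L2_set (\<lambda>b. s / det U * cofactor U 0 b) {..<n}"
    using y by (intro L2_set_cong) auto
  also have "\<dots> = \<bar>s / det U\<bar> * L2_set (cofactor U 0) {..<n}"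
    by (rule L2_set_scale)
  finally show ?thesis
    by (simp add: a1_def a2_def U_def s_def cof_first abs_mult power_abs)
qed

lemma vnorm_alpha_2_minus_alpha_1:
  assumes "2 \<le> d" and "Zbasis d z" and indep: "under_indep d z 1" "under_indep d z 2"
  shows "vnorm d (alpha d z 2 - alpha d z 1)
       = detLam d z 2 (d-2) / (detLam d z 1 (d-1) * detLam d z 2 (d-1))"
proof -
  define n where "n = d - 1"
  have d: "d = Suc n" and "0 < n" using \<open>2 \<le> d\<close> by (auto simp: n_def)
  let ?M = "coord_mat d (zr z) 1"
  have U1: "det (coord_mat n (zr z) 1) \<noteq> 0" and U2: "det (coord_mat n (zr z) 2) \<noteq> 0"
    using det_coord_mat_neq_0 indep \<open>2 \<le> d\<close> by (simp_all add: n_def)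
  have "alpha d z 1 = cofactor_point d ?M n"
    using U1 indep(1) \<open>2 \<le> d\<close>
    by (intro alpha_eq_cofactor_point) (auto simp: d cofactor_coord_mat_last)
  moreover have "alpha d z 2 = cofactor_point d ?M 0"
    using U2 indep(2) \<open>2 \<le> d\<close> cofactor_coord_mat_first[of n "zr z" 1]
    by (intro alpha_eq_cofactor_point) (auto simp: d numeral_2_eq_2)
  ultimately show ?thesis
    using dist_cofactor_points[OF \<open>0 < n\<close> U1 U2] abs_det_coord_mat_Zbasis[OF assms(2)]
      detLam_tail_eq_L2_cofactor[OF indep(1) \<open>2 \<le> d\<close>]
      detLam_eq_abs_det[of d z 1] detLam_eq_abs_det[of d z 2]
    by (simp add: d numeral_2_eq_2)
qed

section \<open>Nested balls\<close>

lemma plane_ball_subset_relint: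
  assumes "vnorm d (a - b) + r < R"
  shows "{x \<in> plane d. vnorm d (x - a) \<le> r} \<subseteq> relint_plane d {x \<in> plane d. vnorm d (x - b) \<le> R}"
proof
  fix x assume "x \<in> {x \<in> plane d. vnorm d (x - a) \<le> r}"
  then have x: "x \<in> plane d" and xa: "vnorm d (x - a) \<le> r" by auto
  define e where "e = R - r - vnorm d (a - b)"
  have "0 < e" using assms by (simp add: e_def)
  have close: "vnorm d (y - b) < R" if "vnorm d (y - x) < e" for y
  proof -
    have "y - b = (\<lambda>i. (y - x) i + ((x - a) i + (a - b) i))" by auto
    then have "vnorm d (y - b) \<le> vnorm d (y - x) + vnorm d (\<lambda>i. (x - a) i + (a - b) i)"
      using vnorm_triangle by metis
    also have "vnorm d (\<lambda>i. (x - a) i + (a - b) i) \<le> vnorm d (x - a) + vnorm d (a - b)"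
      by (rule vnorm_triangle)
    finally show ?thesis using that xa unfolding e_def by linarith
  qed
  have "vnorm d (x - x) = 0" by (simp add: vnorm_def ip_def)
  then show "x \<in> relint_plane d {x \<in> plane d. vnorm d (x - b) \<le> R}"
    using close \<open>0 < e\<close> x unfolding relint_plane_def by (fastforce intro: less_imp_le)
qed

lemma radius_bounds:
  fixes a b c D E g :: real
  assumes "0 < b" "0 < c" "0 < D" "0 \<le> g"
    and "D \<le> a * g" "a \<le> c" "3 * b * g < E"
  shows "1 / (2*c*E) < 1 / (2*b*D) / 3" and "g / (D*E) + 1 / (2*c*E) < 1 / (2*b*D)"
proof -
  have "0 < E" using assms by (smt (verit) mult_nonneg_nonneg)
  have "a * g \<le> c * g" using assms by (simp add: mult_right_mono)
  then have h1: "b * D \<le> b * (c * g)" using assms by (simp add: mult_left_mono)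
  have h2: "c * (3 * b * g) < c * E" using assms by simp
  have "6 * b * D < 2 * c * E" using h1 h2 by (simp add: algebra_simps)
  then show "1 / (2*c*E) < 1 / (2*b*D) / 3" using assms \<open>0 < E\<close> by (simp add: field_simps)
  have "2 * b * c * g + b * D < c * E" using h1 h2 by (simp add: algebra_simps)
  then have "D * (2 * b * c * g + b * D) < D * (c * E)" using assms by simp
  then have "b * (D * (D * 2)) + b * (c * (D * (g * 4))) < c * (D * (E * 2))"
    by (simp add: algebra_simps)
  then show "g / (D*E) + 1 / (2*c*E) < 1 / (2*b*D)" using assms \<open>0 < E\<close> by (simp add: field_simps)
qed

theorem lemma6:
  fixes d :: nat and z :: "nat \<Rightarrow> nat \<Rightarrow> int"
  assumes "d \<ge> 3"
    and "Zbasis d z"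
    and "under_indep d z 1" and "under_indep d z 2"
    and "vnorm (d-1) (zr z 3) \<ge> vnorm (d-1) (zr z 1)"
    and "detLam d z 2 (d-1) > 3 * vnorm (d-1) (zr z 2) * detLam d z 2 (d-2)"
  shows "Sk d z 2 \<subseteq> relint_plane d (Sk d z 1) \<and> Rk d z 2 < Rk d z 1 / 3"
proof -
  let ?A = "\<lambda>k. vnorm (d-1) (zr z k)"
  have "vnorm d (alpha d z 2 - alpha d z 1)
      = detLam d z 2 (d-2) / (detLam d z 1 (d-1) * detLam d z 2 (d-1))"
    using vnorm_alpha_2_minus_alpha_1 assms(1-4) by simp
  moreover have "detLam d z 1 (d-1) \<le> ?A 1 * detLam d z 2 (d-2)"
    using detLam_le_vnorm_mult_detLam[OF assms(3)] assms(1) by (simp add: numeral_2_eq_2)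
  moreover have "0 < detLam d z 1 (d-1)" "0 \<le> detLam d z 2 (d-2)"
    using detLam_pos[OF assms(3)] detLam_tail_eq_L2_cofactor[OF assms(3)] assms(1)
    by (simp_all add: numeral_2_eq_2)
  moreover have "0 < ?A 2" "0 < ?A 3"
    using vnorm_pos_if_under_indep[OF assms(4)] assms(1) by auto
  moreover have "Rk d z 1 = 1 / (2 * ?A 2 * detLam d z 1 (d-1))"
    unfolding Rk_def one_add_one ..
  moreover have "Rk d z 2 = 1 / (2 * ?A 3 * detLam d z 2 (d-1))"
    by (simp add: Rk_def)
  ultimately have "Rk d z 2 < Rk d z 1 / 3"
    and "vnorm d (alpha d z 2 - alpha d z 1) + Rk d z 2 < Rk d z 1"
    using radius_bounds[where a = "?A 1" and b = "?A 2" and c = "?A 3" and D = "detLam d z 1 (d-1)"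
        and E = "detLam d z 2 (d-1)" and g = "detLam d z 2 (d-2)"] assms(5,6)
    by simp_all
  then show ?thesis
    using plane_ball_subset_relint unfolding Sk_def by blast
qed

end
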